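(* Let $(u_n)_{n \geq 0}$ be a sequence of integers, not identically zero, satisfying $u_n = a_1 u_{n-1} + \cdots + a_k u_{n-k}$ for all $n \geq k$, with $a_1, \ldots, a_k \in \mathbf{Z}$ and $a_k \neq 0$. Let $\mathbf{K}$ be the splitting field over $\mathbf{Q}$ of $f_u(X) = X^k - a_1 X^{k-1} - \cdots - a_k$, let $\alpha_1, \ldots, \alpha_r \in \mathbf{K}$ be the distinct roots of $f_u$, and let $g_1, \ldots, g_r \in \mathbf{K}[X]$ be the polynomials such that $u_n = \sum_{i=1}^r g_i(n)\alpha_i^n$ for all integers $n \geq 0$. Then $(u_n/n)_{n \geq 1}$ is a linear recurrence if and only if $g_1(0) = \cdots = g_r(0) = 0$. Moreover, in such a case the set $\mathcal{A}_u = \{n \in \mathbf{N} : \gcd(n, u_n) = 1\}$ is finite.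
   Context: $\mathbf{N}$ denotes the set of positive integers. A sequence is a linear recurrence if it satisfies a linear recurrence relation of finite order with constant (complex) coefficients. The polynomials $g_i$ in the representation $u_n = \sum_{i=1}^r g_i(n)\alpha_i^n$ exist and are uniquely determined by $(u_n)$. *)

theory Defs
  imports "HOL-Computational_Algebra.Polynomial" Complex_Main
begin

definition is_linrec :: "(nat \<Rightarrow> complex) \<Rightarrow> bool" where
  "is_linrec w \<longleftrightarrow> (\<exists>d (c :: nat \<Rightarrow> complex). \<forall>n. w (n + d) = (\<Sum>i<d. c i * w (n + i)))"

definition char_poly :: "(nat \<Rightarrow> int) \<Rightarrow> nat \<Rightarrow> complex poly" where
  "char_poly a k = monom 1 k - (\<Sum>i = 1..k. monom (of_int (a i)) (k - i))"

end

theory Submission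
  imports Defs
begin

text \<open>
  If all g(0) vanish, then w m = u (m + 1) / (m + 1) is again a generalized power sum
  \<Sum> q(m) \<alpha>^m, hence annihilated by \<Prod> (E - \<alpha>)^(deg q + 1) for the shift E, and therefore
  by a power T of the monic integer polynomial f_u. The integral recurrence given by T makes
  D! w m an integer for D = deg T, so every n coprime to u n divides D!.
  Conversely, multiplying a recurrence of order d for w by \<Prod>j\<le>d. (n + j + 1) yields a
  generalized power sum that vanishes identically. By uniqueness of such representations
  its polynomial coefficients vanish, and evaluating them at n = -(d + 1) leaves only a
  nonzero multiple of \<alpha>^(d + 1) g(0).
\<close>

text \<open>\<open>shift_op R s\<close> is \<open>R(E) s\<close> for the shift operator \<open>(E s) n = s (n + 1)\<close>.\<close>

definition shift_op :: "'a::comm_semiring_1 poly \<Rightarrow> (nat \<Rightarrow> 'a) \<Rightarrow> nat \<Rightarrow> 'a" where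
  "shift_op R s n = (\<Sum>i\<le>degree R. coeff R i * s (n + i))"

lemma shift_op_conv_sum:
  "degree R \<le> N \<Longrightarrow> shift_op R s n = (\<Sum>i\<le>N. coeff R i * s (n + i))"
  unfolding shift_op_def by (rule sum.mono_neutral_left) (auto simp: coeff_eq_0)

lemma shift_op_0 [simp]: "shift_op 0 s n = 0"
  by (simp add: shift_op_def)

lemma shift_op_pCons: "shift_op (pCons a R) s n = a * s n + shift_op R s (Suc n)"
proof -
  have "shift_op (pCons a R) s n = (\<Sum>i\<le>Suc (degree R). coeff (pCons a R) i * s (n + i))"
    by (rule shift_op_conv_sum) (rule degree_pCons_le)
  also have "\<dots> = a * s n + (\<Sum>i\<le>degree R. coeff R i * s (Suc n + i))"
    by (subst sum.atMost_Suc_shift) simp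
  finally show ?thesis by (simp add: shift_op_def)
qed

lemma shift_op_add: "shift_op (R + S) s n = shift_op R s n + shift_op S s n"
proof -
  let ?N = "max (degree R) (degree S)"
  have "shift_op (R + S) s n = (\<Sum>i\<le>?N. coeff (R + S) i * s (n + i))"
    by (rule shift_op_conv_sum) (rule degree_add_le_max)
  also have "\<dots> = (\<Sum>i\<le>?N. coeff R i * s (n + i)) + (\<Sum>i\<le>?N. coeff S i * s (n + i))"
    by (simp add: distrib_right sum.distrib)
  finally show ?thesis by (simp add: shift_op_conv_sum[of _ ?N])
qed

lemma shift_op_smult: "shift_op (smult c R) s n = c * shift_op R s n"
proof -
  have "shift_op (smult c R) s n = (\<Sum>i\<le>degree R. coeff (smult c R) i * s (n + i))"
    by (rule shift_op_conv_sum) (rule degree_smult_le)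
  then show ?thesis by (simp add: shift_op_def sum_distrib_left mult.assoc)
qed

lemma shift_op_mult: "shift_op (R * S) s n = shift_op R (shift_op S s) n"
proof (induction R arbitrary: n)
  case (pCons a R)
  show ?case by (simp add: shift_op_add shift_op_smult shift_op_pCons pCons.IH)
qed simp

lemma shift_op_scale: "shift_op R (\<lambda>m. c * s m) n = c * shift_op R s n"
  by (simp add: shift_op_def sum_distrib_left mult_ac)

lemma shift_op_sum: "shift_op R (\<lambda>m. \<Sum>x\<in>A. f x m) n = (\<Sum>x\<in>A. shift_op R (f x) n)"
  unfolding shift_op_def by (simp add: sum_distrib_left sum.swap[of _ A])

lemma shift_op_annihilates_mult:
  assumes "\<And>n. shift_op S s n = 0" shows "shift_op (R * S) s n = 0"
proof -
  have "shift_op S s = (\<lambda>_. 0)" using assms by auto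
  then have "shift_op (R * S) s n = shift_op R (\<lambda>_. 0) n" by (simp add: shift_op_mult)
  then show ?thesis by (simp add: shift_op_def)
qed

lemma shift_op_annihilates_dvd:
  assumes "S dvd T" "\<And>n. shift_op S s n = 0" shows "shift_op T s n = 0"
proof -
  from assms(1) obtain Q where "T = Q * S" by (metis dvdE mult.commute)
  then show ?thesis using shift_op_annihilates_mult[OF assms(2)] by simp
qed

lemma shift_op_annihilates_prod:
  assumes "finite A" "\<And>x n. x \<in> A \<Longrightarrow> shift_op (R x) (f x) n = 0"
  shows "shift_op (\<Prod>x\<in>A. R x) (\<lambda>m. \<Sum>x\<in>A. f x m) n = 0"
proof -
  have "shift_op (\<Prod>x\<in>A. R x) (f y) n = 0" if "y \<in> A" for y n
    using assms(2) that by (intro shift_op_annihilates_dvd[OF dvd_prodI[OF assms(1) that]])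
  then show ?thesis by (simp add: shift_op_sum)
qed

lemma degree_pcompose_shift_diff:
  fixes q :: "'a::idom poly"
  shows "pcompose q [:1, 1:] - q = 0 \<or> degree (pcompose q [:1, 1:] - q) < degree q"
proof (cases "degree q = 0")
  case True
  then obtain c where "q = [:c:]" by (rule degree_eq_zeroE)
  then show ?thesis by simp
next
  case False
  have deg: "degree (pcompose q [:1, 1:]) = degree q"
    by (simp add: degree_pcompose)
  have "coeff (pcompose q [:1, 1:] - q) (degree q) = 0"
    using lead_coeff_comp[of "[:1, 1:]" q] deg by simp
  moreover have "degree (pcompose q [:1, 1:] - q) \<le> degree q"
    using deg by (intro degree_diff_le) simp_all
  ultimately show ?thesis
    using False by (metis le_neq_implies_less leading_coeff_0_iff)
qed

lemma coeff_smult_pcompose_shift_diff: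
  fixes q :: "'a::idom poly"
  shows "coeff (smult \<alpha> (pcompose q [:1, 1:]) - smult \<beta> q) (degree q) = (\<alpha> - \<beta>) * lead_coeff q"
  using lead_coeff_comp[of "[:1, 1:]" q] by (simp add: degree_pcompose left_diff_distrib)

lemma poly_eq_0_if_zero_on_nat:
  fixes q :: "'a::{idom,ring_char_0} poly"
  assumes "\<And>n. poly q (of_nat n) = 0" shows "q = 0"
proof (rule ccontr)
  assume "q \<noteq> 0"
  then have "finite {x. poly q x = 0}" by (rule poly_roots_finite)
  moreover have "(\<nat> :: 'a set) \<subseteq> {x. poly q x = 0}"
    using assms by (auto elim: Nats_cases)
  ultimately show False using Nats_infinite finite_subset by blast
qed

lemma coeff_power_Ints:
  assumes "\<And>i. coeff p i \<in> \<int>" shows "coeff (p ^ N) i \<in> \<int>"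
proof (induction N arbitrary: i)
  case 0
  then show ?case by (simp add: coeff_1)
next
  case (Suc N)
  then show ?case using assms by (simp add: coeff_mult Ints_sum Ints_mult)
qed

definition gen_power_sum :: "'a set \<Rightarrow> ('a \<Rightarrow> 'a poly) \<Rightarrow> nat \<Rightarrow> 'a::comm_semiring_1" where
  "gen_power_sum A p n = (\<Sum>\<alpha>\<in>A. poly (p \<alpha>) (of_nat n) * \<alpha> ^ n)"

lemma gen_power_sum_cong:
  "(\<And>\<alpha>. \<alpha> \<in> A \<Longrightarrow> p \<alpha> = q \<alpha>) \<Longrightarrow> gen_power_sum A p n = gen_power_sum A q n"
  by (simp add: gen_power_sum_def)

lemma gen_power_sum_shift:
  "gen_power_sum A p (n + i)
     = gen_power_sum A (\<lambda>\<alpha>. smult (\<alpha> ^ i) (pcompose (p \<alpha>) [:of_nat i, 1:])) n"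
  unfolding gen_power_sum_def
  by (intro sum.cong) (simp_all add: poly_pcompose power_add mult_ac add_ac)

lemma gen_power_sum_mult_poly:
  "poly P (of_nat n) * gen_power_sum A p n = gen_power_sum A (\<lambda>\<alpha>. P * p \<alpha>) n"
  by (simp add: gen_power_sum_def sum_distrib_left mult_ac)

lemma gen_power_sum_smult:
  "gen_power_sum A (\<lambda>\<alpha>. smult c (p \<alpha>)) n = c * gen_power_sum A p n"
  by (simp add: gen_power_sum_def sum_distrib_left mult_ac)

lemma gen_power_sum_diff:
  fixes p q :: "'a \<Rightarrow> 'a::comm_ring_1 poly"
  shows "gen_power_sum A (\<lambda>\<alpha>. p \<alpha> - q \<alpha>) n = gen_power_sum A p n - gen_power_sum A q n"
  by (simp add: gen_power_sum_def sum_subtractf left_diff_distrib)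

lemma gen_power_sum_sum:
  "gen_power_sum A (\<lambda>\<alpha>. \<Sum>i\<in>I. p i \<alpha>) n = (\<Sum>i\<in>I. gen_power_sum A (p i) n)"
  by (simp add: gen_power_sum_def poly_sum sum_distrib_right sum.swap[of _ I])

lemma gen_power_sum_shift_sub:
  fixes p :: "'a \<Rightarrow> 'a::comm_ring_1 poly"
  shows "gen_power_sum A (\<lambda>\<alpha>. smult \<alpha> (pcompose (p \<alpha>) [:1, 1:]) - smult \<beta> (p \<alpha>)) n
           = gen_power_sum A p (n + 1) - \<beta> * gen_power_sum A p n"
  using gen_power_sum_shift[of A p n 1] by (simp add: gen_power_sum_diff gen_power_sum_smult)

lemma shift_op_linear_factor_gen_power_sum:
  fixes q :: "'a::comm_ring_1 poly"
  shows "shift_op [:-\<alpha>, 1:] (gen_power_sum {\<alpha>} (\<lambda>_. q)) n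
     = gen_power_sum {\<alpha>} (\<lambda>_. smult \<alpha> (pcompose q [:1, 1:] - q)) n"
proof -
  have "poly (pcompose q [:1, 1:] - q) (of_nat n) = poly q (of_nat (Suc n)) - poly q (of_nat n)"
    by (simp add: poly_pcompose add.commute)
  then show ?thesis
    by (simp add: shift_op_pCons gen_power_sum_def algebra_simps)
qed

lemma shift_op_annihilates_gen_power_sum_single:
  fixes q :: "'a::idom poly"
  assumes "degree q \<le> m"
  shows "shift_op ([:-\<alpha>, 1:] ^ Suc m) (gen_power_sum {\<alpha>} (\<lambda>_. q)) n = 0"
  using assms
proof (induction m arbitrary: q n)
  case 0
  then obtain c where "q = [:c:]" by (metis degree_eq_zeroE le_zero_eq)
  then show ?case by (simp add: shift_op_pCons gen_power_sum_def)
next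
  case (Suc m)
  have "degree (pcompose q [:1, 1:] - q) \<le> m"
    using degree_pcompose_shift_diff[of q] Suc.prems by auto
  then have deg: "degree (smult \<alpha> (pcompose q [:1, 1:] - q)) \<le> m"
    using degree_smult_le order_trans by blast
  have "shift_op ([:-\<alpha>, 1:] ^ Suc (Suc m)) (gen_power_sum {\<alpha>} (\<lambda>_. q)) n
      = shift_op ([:-\<alpha>, 1:] ^ Suc m) (shift_op [:-\<alpha>, 1:] (gen_power_sum {\<alpha>} (\<lambda>_. q))) n"
    by (simp only: power_Suc2 shift_op_mult)
  also have "shift_op [:-\<alpha>, 1:] (gen_power_sum {\<alpha>} (\<lambda>_. q))
      = gen_power_sum {\<alpha>} (\<lambda>_. smult \<alpha> (pcompose q [:1, 1:] - q))"
    by (rule ext) (rule shift_op_linear_factor_gen_power_sum)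
  finally show ?case using Suc.IH[OF deg] by simp
qed

lemma gen_power_sum_eq_0_imp:
  fixes p :: "'a \<Rightarrow> 'a::{idom,ring_char_0} poly"
  assumes "finite A" "0 \<notin> A" "\<And>n. gen_power_sum A p n = 0"
  shows "\<forall>\<alpha>\<in>A. p \<alpha> = 0"
  using assms
proof (induction A arbitrary: p rule: finite_induct)
  case empty
  then show ?case by simp
next
  case (insert \<beta> B)
  have "\<forall>\<alpha>\<in>insert \<beta> B. p \<alpha> = 0"
    if "degree (p \<beta>) = d" "\<And>n. gen_power_sum (insert \<beta> B) p n = 0" for d p
    using that
  proof (induction d arbitrary: p rule: less_induct)
    case (less d)
    \<comment> \<open>Passing from \<open>S n\<close> to \<open>S (n + 1) - \<beta> S n\<close> lowers the degree at \<open>\<beta>\<close> and keeps it elsewhere.\<close>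
    define p' where "p' = (\<lambda>\<alpha>. smult \<alpha> (pcompose (p \<alpha>) [:1, 1:]) - smult \<beta> (p \<alpha>))"
    have sum_p': "gen_power_sum (insert \<beta> B) p' n = 0" for n
      unfolding p'_def gen_power_sum_shift_sub using less.prems(2) by simp
    have p'_nonzero: "p' \<alpha> \<noteq> 0" if "\<alpha> \<noteq> \<beta>" "p \<alpha> \<noteq> 0" for \<alpha>
    proof -
      have "coeff (p' \<alpha>) (degree (p \<alpha>)) \<noteq> 0"
        unfolding p'_def using coeff_smult_pcompose_shift_diff[of \<alpha> "p \<alpha>" \<beta>] that by simp
      then show ?thesis by auto
    qed
    have "\<forall>\<alpha>\<in>B. p' \<alpha> = 0"
    proof (cases "p' \<beta> = 0")
      case True
      then have "gen_power_sum B p' n = 0" for n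
        using sum_p'[of n] insert.hyps by (simp add: gen_power_sum_def)
      then show ?thesis using insert.IH insert.prems(1) by blast
    next
      case False
      have "p' \<beta> = smult \<beta> (pcompose (p \<beta>) [:1, 1:] - p \<beta>)"
        by (simp add: p'_def smult_diff_right)
      then have "degree (p' \<beta>) < d"
        using False degree_pcompose_shift_diff[of "p \<beta>"] less.prems(1)
        by (metis degree_smult_le order.strict_trans1 smult_0_right)
      then show ?thesis using less.IH sum_p' by blast
    qed
    then have p_B: "\<forall>\<alpha>\<in>B. p \<alpha> = 0"
      using p'_nonzero insert.hyps(2) by metis
    have "poly (p \<beta>) (of_nat n) * \<beta> ^ n = 0" for n
      using less.prems(2)[of n] p_B insert.hyps by (simp add: gen_power_sum_def)
    then have "p \<beta> = 0"
      using insert.prems(1) by (intro poly_eq_0_if_zero_on_nat) simp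
    with p_B show ?case by simp
  qed
  then show ?case using insert.prems(2) by blast
qed

lemma shift_op_annihilates_gen_power_sum:
  fixes q :: "'a \<Rightarrow> 'a::idom poly"
  assumes "finite A" "\<And>\<alpha>. \<alpha> \<in> A \<Longrightarrow> poly f \<alpha> = 0"
  shows "shift_op (f ^ (\<Sum>\<alpha>\<in>A. Suc (degree (q \<alpha>)))) (gen_power_sum A q) n = 0"
proof -
  let ?S = "\<Prod>\<alpha>\<in>A. [:-\<alpha>, 1:] ^ Suc (degree (q \<alpha>))"
  have "?S dvd (\<Prod>\<alpha>\<in>A. f ^ Suc (degree (q \<alpha>)))"
    using assms(2) by (intro prod_dvd_prod dvd_power_same) (simp add: poly_eq_0_iff_dvd)
  then have dvd: "?S dvd f ^ (\<Sum>\<alpha>\<in>A. Suc (degree (q \<alpha>)))"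
    by (simp only: power_sum)
  have sum_singletons: "gen_power_sum A q = (\<lambda>m. \<Sum>\<alpha>\<in>A. gen_power_sum {\<alpha>} (\<lambda>_. q \<alpha>) m)"
    by (rule ext) (simp add: gen_power_sum_def)
  have "shift_op ?S (gen_power_sum A q) m = 0" for m
    unfolding sum_singletons
    by (intro shift_op_annihilates_prod assms(1) shift_op_annihilates_gen_power_sum_single order_refl)
  then show ?thesis by (rule shift_op_annihilates_dvd[OF dvd])
qed

lemma is_linrec_if_shift_op_annihilates:
  assumes "R \<noteq> 0" "\<And>n. shift_op R s n = 0" shows "is_linrec s"
proof -
  let ?d = "degree R" and ?l = "lead_coeff R"
  have l: "?l \<noteq> 0" using assms(1) by simp
  have "s (n + ?d) = (\<Sum>i<?d. (- coeff R i / ?l) * s (n + i))" for n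
  proof -
    have "0 = (\<Sum>i<?d. coeff R i * s (n + i)) + ?l * s (n + ?d)"
      using assms(2)[of n] by (simp add: shift_op_def lessThan_Suc_atMost[symmetric])
    then have "s (n + ?d) = - (\<Sum>i<?d. coeff R i * s (n + i)) / ?l"
      using l by (simp add: field_simps add_eq_0_iff)
    then show ?thesis
      by (simp add: sum_divide_distrib sum_negf[symmetric])
  qed
  then show ?thesis
    unfolding is_linrec_def by (intro exI[of _ ?d] exI[of _ "\<lambda>i. - coeff R i / ?l"]) blast
qed

lemma shift_op_monic_annihilates_Ints:
  fixes T :: "'a::comm_ring_1 poly"
  assumes "lead_coeff T = 1" "\<And>i. coeff T i \<in> \<int>" "\<And>n. shift_op T s n = 0"
    and "\<And>m. m < degree T \<Longrightarrow> s m \<in> \<int>"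
  shows "s m \<in> \<int>"
proof (induction m rule: less_induct)
  case (less m)
  show ?case
  proof (cases "m < degree T")
    case False
    then obtain n where m: "m = n + degree T" by (metis add.commute le_add_diff_inverse not_less)
    have "0 = (\<Sum>i<degree T. coeff T i * s (n + i)) + s m"
      using assms(3)[of n] assms(1) m by (simp add: shift_op_def lessThan_Suc_atMost[symmetric])
    then have "s m = - (\<Sum>i<degree T. coeff T i * s (n + i))"
      by (simp add: eq_neg_iff_add_eq_0 add.commute)
    also have "\<dots> \<in> \<int>"
      using assms(2) less m by (intro Ints_minus Ints_sum Ints_mult) auto
    finally show ?thesis .
  qed (use assms(4) in simp)
qed

lemma finite_gcd_eq_1_if_monic_annihilates:
  fixes T :: "'a::field_char_0 poly" and u :: "nat \<Rightarrow> int"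
  assumes "lead_coeff T = 1" "\<And>i. coeff T i \<in> \<int>"
    and "\<And>n. shift_op T (\<lambda>m. of_int (u (m + 1)) / of_nat (m + 1)) n = 0"
  shows "finite {n. n \<ge> 1 \<and> gcd (int n) (u n) = 1}"
proof -
  let ?D = "degree T"
  define s :: "nat \<Rightarrow> 'a" where "s m = of_nat (fact ?D) * (of_int (u (m + 1)) / of_nat (m + 1))" for m
  have Ints: "s m \<in> \<int>" for m
  proof (rule shift_op_monic_annihilates_Ints[OF assms(1,2)])
    show "shift_op T s n = 0" for n
      unfolding s_def by (simp only: shift_op_scale assms(3) mult_zero_right)
    show "s m \<in> \<int>" if "m < ?D" for m
    proof -
      have "m + 1 dvd fact ?D" using that by (intro dvd_fact) auto
      then obtain r where r: "fact ?D = (m + 1) * r" by (elim dvdE)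
      have "(of_nat (m + 1) :: 'a) \<noteq> 0" by (simp only: of_nat_eq_0_iff)
      then have "of_nat (m + 1) * (of_int (u (m + 1)) / of_nat (m + 1)) = (of_int (u (m + 1)) :: 'a)"
        by simp
      then have "s m = of_nat r * of_int (u (m + 1))"
        unfolding s_def r of_nat_mult by (simp only: mult_ac)
      then show ?thesis by simp
    qed
  qed
  have "n dvd fact ?D" if "n \<ge> 1" "gcd (int n) (u n) = 1" for n
  proof -
    obtain m where m: "n = m + 1" using \<open>n \<ge> 1\<close> by (metis add.commute le_add_diff_inverse)
    obtain z where "of_nat (fact ?D) * of_int (u n) / of_nat n = (of_int z :: 'a)"
      using Ints[of m] m by (auto simp: s_def elim: Ints_cases)
    then have "of_nat (fact ?D) * of_int (u n) = (of_int z * of_nat n :: 'a)"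
      using \<open>n \<ge> 1\<close> by (simp add: divide_eq_eq)
    then have "(of_int (int (fact ?D) * u n) :: 'a) = of_int (z * int n)" by simp
    then have "int n dvd int (fact ?D) * u n" by (simp only: of_int_eq_iff) simp
    then have "int n dvd int (fact ?D)"
      using that(2) by (simp add: coprime_iff_gcd_eq_1 coprime_dvd_mult_left_iff)
    then show ?thesis by (simp only: of_nat_dvd_iff)
  qed
  then have "{n. n \<ge> 1 \<and> gcd (int n) (u n) = 1} \<subseteq> {..fact ?D}"
    by (auto intro: dvd_imp_le)
  then show ?thesis by (rule finite_subset) simp
qed

lemma gen_power_sum_div_index:
  fixes g :: "'a \<Rightarrow> 'a::field_char_0 poly"
  assumes "\<And>n. s n = gen_power_sum A g n" and "\<And>\<alpha>. \<alpha> \<in> A \<Longrightarrow> poly (g \<alpha>) 0 = 0"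
  shows "s (m + 1) / of_nat (m + 1)
           = gen_power_sum A (\<lambda>\<alpha>. smult \<alpha> (pcompose (g \<alpha> div [:0, 1:]) [:1, 1:])) m"
proof -
  let ?q = "\<lambda>\<alpha>. smult \<alpha> (pcompose (g \<alpha> div [:0, 1:]) [:1, 1:])"
  have "smult \<alpha> (pcompose (g \<alpha>) [:1, 1:]) = [:1, 1:] * ?q \<alpha>" if "\<alpha> \<in> A" for \<alpha>
  proof -
    have "[:0, 1:] dvd g \<alpha>" using assms(2)[OF that] poly_eq_0_iff_dvd[of "g \<alpha>" 0] by simp
    then obtain h where h: "g \<alpha> = [:0, 1:] * h" by (elim dvdE)
    then have "g \<alpha> div [:0, 1:] = h" using nonzero_mult_div_cancel_left[of "[:0, 1:]" h] by simp
    with h show ?thesis by (simp add: pcompose_mult pcompose_pCons)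
  qed
  then have "gen_power_sum A (\<lambda>\<alpha>. smult \<alpha> (pcompose (g \<alpha>) [:1, 1:])) m
      = gen_power_sum A (\<lambda>\<alpha>. [:1, 1:] * ?q \<alpha>) m"
    by (rule gen_power_sum_cong)
  moreover have "s (m + 1) = gen_power_sum A (\<lambda>\<alpha>. smult \<alpha> (pcompose (g \<alpha>) [:1, 1:])) m"
    using assms(1)[of "m + 1"] gen_power_sum_shift[of A g m 1] by simp
  ultimately have "s (m + 1) = of_nat (m + 1) * gen_power_sum A ?q m"
    using gen_power_sum_mult_poly[of "[:1, 1:]" m A ?q] by (simp add: add.commute)
  moreover have "(of_nat (m + 1) :: 'a) \<noteq> 0" by (simp only: of_nat_eq_0_iff)
  ultimately show ?thesis by simp
qed

lemma gen_power_sum_clear_denominator: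
  fixes g :: "'a \<Rightarrow> 'a::comm_ring_1 poly"
  assumes "finite J" "i \<in> J" "\<And>n. s n = gen_power_sum A g n"
    and "\<And>m. w m * of_nat (m + 1) = s (m + 1)"
  shows "poly (\<Prod>j\<in>J. [:of_nat (j + 1), 1:]) (of_nat n) * w (n + i)
    = gen_power_sum A (\<lambda>\<alpha>. (\<Prod>j\<in>J - {i}. [:of_nat (j + 1), 1:])
                           * smult (\<alpha> ^ (i + 1)) (pcompose (g \<alpha>) [:of_nat (i + 1), 1:])) n"
proof -
  let ?E = "\<Prod>j\<in>J - {i}. [:of_nat (j + 1), 1:]"
  have split: "(\<Prod>j\<in>J. [:of_nat (j + 1), 1:]) = [:of_nat (i + 1), 1:] * ?E"
    using assms(1,2) by (rule prod.remove)
  have "poly (\<Prod>j\<in>J. [:of_nat (j + 1), 1:]) (of_nat n) * w (n + i)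
      = poly ?E (of_nat n) * (w (n + i) * of_nat (n + i + 1))"
    unfolding split poly_mult by (simp add: algebra_simps)
  also have "\<dots> = poly ?E (of_nat n) * gen_power_sum A g (n + (i + 1))"
    using assms(3)[of "n + i + 1"] assms(4)[of "n + i"] by (simp add: add.assoc)
  finally show ?thesis
    unfolding gen_power_sum_shift gen_power_sum_mult_poly .
qed

lemma poly_at_0_eq_0_if_div_index_linrec:
  fixes g :: "'a \<Rightarrow> 'a::field_char_0 poly" and c :: "nat \<Rightarrow> 'a"
  assumes A: "finite A" "0 \<notin> A" and s: "\<And>n. s n = gen_power_sum A g n"
    and w: "\<And>m. w m * of_nat (m + 1) = s (m + 1)"
    and rec: "\<And>n. w (n + d) = (\<Sum>i<d. c i * w (n + i))"
  shows "\<forall>\<alpha>\<in>A. poly (g \<alpha>) 0 = 0"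
proof -
  \<comment> \<open>\<open>P\<close> clears the denominators \<open>n + i + 1\<close> of the recurrence; \<open>E i\<close> is \<open>P\<close> without its \<open>i\<close>-th factor.\<close>
  define E :: "nat \<Rightarrow> 'a poly" where "E i = (\<Prod>j\<in>{..d}-{i}. [:of_nat (j + 1), 1:])" for i
  define Y where "Y i \<alpha> = E i * smult (\<alpha> ^ (i + 1)) (pcompose (g \<alpha>) [:of_nat (i + 1), 1:])" for i \<alpha>
  define P :: "'a poly" where "P = (\<Prod>j\<le>d. [:of_nat (j + 1), 1:])"
  have P_w: "poly P (of_nat n) * w (n + i) = gen_power_sum A (Y i) n" if "i \<le> d" for i n
    unfolding P_def Y_def E_def using that s w by (intro gen_power_sum_clear_denominator) auto
  define H where "H \<alpha> = Y d \<alpha> - (\<Sum>i<d. smult (c i) (Y i \<alpha>))" for \<alpha>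
  have "gen_power_sum A H n = 0" for n
  proof -
    have "gen_power_sum A H n = gen_power_sum A (Y d) n - (\<Sum>i<d. c i * gen_power_sum A (Y i) n)"
      unfolding H_def gen_power_sum_diff gen_power_sum_sum gen_power_sum_smult ..
    also have "\<dots> = poly P (of_nat n) * (w (n + d) - (\<Sum>i<d. c i * w (n + i)))"
      by (simp add: P_w right_diff_distrib sum_distrib_left mult_ac)
    finally show ?thesis by (simp add: rec)
  qed
  then have H: "\<forall>\<alpha>\<in>A. H \<alpha> = 0"
    using A by (intro gen_power_sum_eq_0_imp) auto
  \<comment> \<open>A root of every \<open>E i\<close> with \<open>i < d\<close>, but not of \<open>E d\<close>.\<close>
  define x :: 'a where "x = - of_nat (d + 1)"
  have E_x: "poly (E i) x = 0" if "i < d" for i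
    unfolding E_def poly_prod using that by (intro prod_zero bexI[of _ d]) (auto simp: x_def)
  have E_d_x: "poly (E d) x \<noteq> 0"
    unfolding E_def poly_prod x_def by (simp add: prod_zero_iff)
  have g_x: "poly (pcompose (g \<alpha>) [:of_nat (d + 1), 1:]) x = poly (g \<alpha>) 0" for \<alpha>
    by (simp add: poly_pcompose x_def)
  show ?thesis
  proof
    fix \<alpha> assume "\<alpha> \<in> A"
    have "poly (H \<alpha>) x = poly (E d) x * \<alpha> ^ (d + 1) * poly (g \<alpha>) 0"
      unfolding H_def Y_def poly_diff poly_sum poly_mult poly_smult g_x by (simp add: E_x)
    then show "poly (g \<alpha>) 0 = 0"
      using H \<open>\<alpha> \<in> A\<close> A(2) E_d_x by auto
  qed
qed

lemma poly_at_0_eq_0_if_is_linrec_div_index: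
  fixes g :: "complex \<Rightarrow> complex poly"
  assumes "finite A" "0 \<notin> A" "\<And>n. s n = gen_power_sum A g n"
    and "is_linrec (\<lambda>m. s (m + 1) / of_nat (m + 1))"
  shows "\<forall>\<alpha>\<in>A. poly (g \<alpha>) 0 = 0"
proof -
  from assms(4) obtain d c
    where "\<And>n. s (n + d + 1) / of_nat (n + d + 1) = (\<Sum>i<d. c i * (s (n + i + 1) / of_nat (n + i + 1)))"
    by (auto simp: is_linrec_def add.assoc)
  moreover have "s (m + 1) / of_nat (m + 1) * of_nat (m + 1) = s (m + 1)" for m
  proof -
    have "(of_nat (m + 1) :: complex) \<noteq> 0" by (simp only: of_nat_eq_0_iff)
    then show ?thesis by simp
  qed
  ultimately show ?thesis
    by (intro poly_at_0_eq_0_if_div_index_linrec[OF assms(1-3), of "\<lambda>m. s (m + 1) / of_nat (m + 1)"])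
       (simp_all add: add.assoc)
qed

lemma shift_op_power_annihilates_div_index:
  fixes g :: "'a \<Rightarrow> 'a::field_char_0 poly"
  assumes "finite A" "\<And>\<alpha>. \<alpha> \<in> A \<Longrightarrow> poly f \<alpha> = 0" "\<And>n. s n = gen_power_sum A g n"
    and "\<And>\<alpha>. \<alpha> \<in> A \<Longrightarrow> poly (g \<alpha>) 0 = 0"
  obtains N where "\<And>n. shift_op (f ^ N) (\<lambda>m. s (m + 1) / of_nat (m + 1)) n = 0"
proof -
  define q where "q = (\<lambda>\<alpha>. smult \<alpha> (pcompose (g \<alpha> div [:0, 1:]) [:1, 1:]))"
  have "(\<lambda>m. s (m + 1) / of_nat (m + 1)) = gen_power_sum A q"
    unfolding q_def using gen_power_sum_div_index[OF assms(3,4)] by auto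
  then show ?thesis
    using that shift_op_annihilates_gen_power_sum[OF assms(1,2)] by metis
qed

lemma coeff_char_poly:
  "coeff (char_poly a k) i
     = (if i = k then 1 else 0) - (\<Sum>j = 1..k. if i = k - j then of_int (a j) else 0)"
  unfolding char_poly_def coeff_diff coeff_sum coeff_monom
  by (intro arg_cong2[where f = "(-)"] sum.cong refl) auto

lemma coeff_char_poly_Ints: "coeff (char_poly a k) i \<in> \<int>"
  unfolding coeff_char_poly by (intro Ints_diff Ints_sum) auto

lemma lead_coeff_char_poly: "lead_coeff (char_poly a k) = 1"
proof -
  have no_a: "(\<Sum>j = 1..k. if i = k - j then (of_int (a j) :: complex) else 0) = 0" if "k \<le> i" for i
    using that by (intro sum.neutral) auto
  have coeff_k: "coeff (char_poly a k) k = 1"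
    unfolding coeff_char_poly using no_a by simp
  have "coeff (char_poly a k) i = 0" if "k < i" for i
    unfolding coeff_char_poly using no_a that by simp
  then have "degree (char_poly a k) \<le> k" by (intro degree_le) auto
  moreover have "k \<le> degree (char_poly a k)" using coeff_k by (intro le_degree) simp
  ultimately show ?thesis using coeff_k by simp
qed

lemma poly_char_poly_0:
  assumes "k \<ge> 1" shows "poly (char_poly a k) 0 = - of_int (a k)"
proof -
  have "(\<Sum>j = 1..k. if 0 = k - j then (of_int (a j) :: complex) else 0)
      = (\<Sum>j = 1..k. if j = k then of_int (a j) else 0)"
    by (rule sum.cong) auto
  then show ?thesis
    using assms unfolding poly_0_coeff_0 coeff_char_poly by simp
qed

theorem lemma2p1:
  fixes u :: "nat \<Rightarrow> int" and a :: "nat \<Rightarrow> int" and k :: nat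
    and g :: "complex \<Rightarrow> complex poly"
  assumes nonzero: "\<exists>n. u n \<noteq> 0"
    and rec: "\<forall>n\<ge>k. u n = (\<Sum>j = 1..k. a j * u (n - j))"
    and ak: "a k \<noteq> 0"
    and repr: "\<forall>n. of_int (u n) = (\<Sum>\<alpha>\<in>{z. poly (char_poly a k) z = 0}. poly (g \<alpha>) (of_nat n) * \<alpha> ^ n)"
  shows "(is_linrec (\<lambda>m. of_int (u (m + 1)) / of_nat (m + 1))
            \<longleftrightarrow> (\<forall>\<alpha>\<in>{z. poly (char_poly a k) z = 0}. poly (g \<alpha>) 0 = 0))
       \<and> ((\<forall>\<alpha>\<in>{z. poly (char_poly a k) z = 0}. poly (g \<alpha>) 0 = 0)
            \<longrightarrow> finite {n :: nat. n \<ge> 1 \<and> gcd (int n) (u n) = 1})"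
proof -
  define f where "f = char_poly a k"
  define A where "A = {z. poly f z = 0}"
  have "k \<ge> 1"
    using nonzero rec by (cases k) auto
  then have "0 \<notin> A"
    using ak by (simp add: A_def f_def poly_char_poly_0)
  have f: "lead_coeff f = 1" "\<And>i. coeff f i \<in> \<int>" "f \<noteq> 0"
    using lead_coeff_char_poly[of a k] coeff_char_poly_Ints[of a k] by (auto simp: f_def)
  then have "finite A"
    unfolding A_def by (intro poly_roots_finite)
  have u: "\<And>n. of_int (u n) = gen_power_sum A g n"
    using repr by (simp add: A_def f_def gen_power_sum_def)
  have "is_linrec (\<lambda>m. of_int (u (m + 1)) / of_nat (m + 1)) \<and> finite {n. n \<ge> 1 \<and> gcd (int n) (u n) = 1}"
    if g0: "\<forall>\<alpha>\<in>A. poly (g \<alpha>) 0 = 0"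
  proof -
    obtain N where N: "\<And>n. shift_op (f ^ N) (\<lambda>m. of_int (u (m + 1)) / of_nat (m + 1)) n = 0"
      by (rule shift_op_power_annihilates_div_index[of A f, OF \<open>finite A\<close> _ u]) (use g0 in \<open>auto simp: A_def\<close>)
    have "lead_coeff (f ^ N) = 1" "\<And>i. coeff (f ^ N) i \<in> \<int>" "f ^ N \<noteq> 0"
      using f by (simp_all add: lead_coeff_power coeff_power_Ints)
    then show ?thesis
      using N is_linrec_if_shift_op_annihilates finite_gcd_eq_1_if_monic_annihilates by blast
  qed
  then show ?thesis
    using poly_at_0_eq_0_if_is_linrec_div_index[OF \<open>finite A\<close> \<open>0 \<notin> A\<close> u]
    unfolding A_def f_def by blast
qed

end
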